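(* For integers $d\geq 2$ and $1\leq k\leq d$, $\gamma_{gr}^{L,k}(Q_d)\geq\lceil 2^d-2^{d-(k+1)}\rceil$.
   Context: $Q_d$ is the $d$-dimensional hypercube: vertices are the $0$-$1$ strings of length $d$, adjacent iff they differ in exactly one position. For a vertex $v$, $N(v)$ is its open neighborhood and $N[v]=N(v)\cup\{v\}$. A sequence $S=(v_1,\ldots,v_m)$ of distinct vertices is a $k$-$L$-sequence if for each $i$ there is $u_i\in N[v_i]$ such that the number of indices $j<i$ with $u_i\in N(v_j)$ is less than $k$. $\gamma_{gr}^{L,k}(G)$ is the maximum length of a $k$-$L$-sequence of $G$. *)

theory Defs
  imports Complex_Main
begin

definition hc_verts :: "nat \<Rightarrow> bool list set" where
  "hc_verts d = {v. length v = d}"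

definition hc_adj :: "nat \<Rightarrow> bool list \<Rightarrow> bool list \<Rightarrow> bool" where
  "hc_adj d u v \<longleftrightarrow> u \<in> hc_verts d \<and> v \<in> hc_verts d \<and>
     card {i. i < d \<and> u ! i \<noteq> v ! i} = 1"

definition open_nbhd :: "'a set \<Rightarrow> ('a \<Rightarrow> 'a \<Rightarrow> bool) \<Rightarrow> 'a \<Rightarrow> 'a set" where
  "open_nbhd V E v = {u \<in> V. E v u}"

definition closed_nbhd :: "'a set \<Rightarrow> ('a \<Rightarrow> 'a \<Rightarrow> bool) \<Rightarrow> 'a \<Rightarrow> 'a set" where
  "closed_nbhd V E v = insert v (open_nbhd V E v)"

text \<open>k-L-sequence: distinct vertices v_1..v_m such that for each i there is
  u_i in N[v_i] with fewer than k indices j < i having u_i in N(v_j).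
  (Indices are 0-based here.)\<close>

definition is_kL_seq :: "'a set \<Rightarrow> ('a \<Rightarrow> 'a \<Rightarrow> bool) \<Rightarrow> nat \<Rightarrow> 'a list \<Rightarrow> bool" where
  "is_kL_seq V E k S \<longleftrightarrow> distinct S \<and> set S \<subseteq> V \<and>
     (\<forall>i < length S. \<exists>u \<in> closed_nbhd V E (S ! i).
        card {j. j < i \<and> u \<in> open_nbhd V E (S ! j)} < k)"

definition gamma_grLk :: "'a set \<Rightarrow> ('a \<Rightarrow> 'a \<Rightarrow> bool) \<Rightarrow> nat \<Rightarrow> nat" where
  "gamma_grLk V E k = Max {length S | S. is_kL_seq V E k S}"

end

(*
  The even-weight vertices of Q_d are pairwise non-adjacent, so they can be listed first, each
  footprinting itself.  An odd-weight vertex v starting with l ones is footprinted by the vertex u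
  obtained from v by flipping bit j = min l (d - 1); the odd-weight vertices are listed by
  increasing j.  A neighbour of u obtained by flipping a bit beyond j would start with j + 1 ones
  and thus come later, so every earlier neighbour of u arises by flipping one of the first j bits,
  and u has at most j < k of them.  This lists all vertices except the odd-weight ones with
  j >= k: for k < d these start with k ones, so there are 2^(d-k-1) of them, and for k = d there
  are none.
*)

theory Submission
  imports Defs
begin

lemma kL_seq_length_le_gamma:
  assumes "finite V" and "is_kL_seq V E k S"
  shows "length S \<le> gamma_grLk V E k"
  unfolding gamma_grLk_def
proof (rule Max_ge)
  show "length S \<in> {length T |T. is_kL_seq V E k T}" using assms(2) by blast
  have "length T \<le> card V" if "is_kL_seq V E k T" for T
  proof -
    have "distinct T" "set T \<subseteq> V" using that by (auto simp: is_kL_seq_def)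
    then show ?thesis using card_mono[OF assms(1)] distinct_card by metis
  qed
  then have "{length T |T. is_kL_seq V E k T} \<subseteq> {..card V}" by auto
  then show "finite {length T |T. is_kL_seq V E k T}" using finite_subset by blast
qed

lemma is_kL_seq_sort_by_rank:
  fixes r :: "'a \<Rightarrow> 'b::linorder"
  assumes "finite A" and "A \<subseteq> V"
    and foot: "\<And>v. v \<in> A \<Longrightarrow> f v \<in> closed_nbhd V E v"
    and few: "\<And>v. v \<in> A \<Longrightarrow>
       card {x \<in> A - {v}. r x \<le> r v \<and> f v \<in> open_nbhd V E x} < k"
  shows "\<exists>S. is_kL_seq V E k S \<and> length S = card A"
proof -
  obtain xs where xs: "set xs = A" "distinct xs" using finite_distinct_list[OF \<open>finite A\<close>] by blast
  define S where "S = sort_key r xs"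
  have S: "set S = A" "distinct S" "sorted (map r S)" using xs by (auto simp: S_def)
  have "is_kL_seq V E k S"
    unfolding is_kL_seq_def
  proof (intro conjI allI impI)
    show "distinct S" "set S \<subseteq> V" using S \<open>A \<subseteq> V\<close> by auto
    fix i assume i: "i < length S"
    define v where "v = S ! i"
    define J where "J = {j. j < i \<and> f v \<in> open_nbhd V E (S ! j)}"
    have "(!) S ` J \<subseteq> {x \<in> A - {v}. r x \<le> r v \<and> f v \<in> open_nbhd V E x}"
      using i S sorted_nth_mono[OF S(3)] by (auto simp: J_def v_def nth_eq_iff_index_eq)
    moreover have "inj_on ((!) S) J"
      using i S(2) by (auto simp: J_def inj_on_def nth_eq_iff_index_eq)
    ultimately have "card J \<le> card {x \<in> A - {v}. r x \<le> r v \<and> f v \<in> open_nbhd V E x}"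
      using \<open>finite A\<close> by (intro card_inj_on_le) auto
    also have "\<dots> < k" using few i S(1) v_def by auto
    finally show "\<exists>u\<in>closed_nbhd V E (S ! i). card {j. j < i \<and> u \<in> open_nbhd V E (S ! j)} < k"
      using foot i S(1) unfolding J_def v_def by auto
  qed
  moreover have "length S = card A" using S distinct_card by fastforce
  ultimately show ?thesis by blast
qed

definition flip_at :: "nat \<Rightarrow> bool list \<Rightarrow> bool list" where
  "flip_at i v = v[i := \<not> v ! i]"

fun odd_weight :: "bool list \<Rightarrow> bool" where
  "odd_weight [] = False"
| "odd_weight (x # xs) = (x \<noteq> odd_weight xs)"

definition leading_ones :: "bool list \<Rightarrow> nat" where
  "leading_ones v = length (takeWhile id v)"

lemma length_flip_at [simp]: "length (flip_at i v) = length v"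
  by (simp add: flip_at_def)

lemma flip_at_flip_at [simp]: "flip_at i (flip_at i v) = v"
  by (cases "i < length v") (auto simp: flip_at_def list_update_beyond)

lemma odd_weight_flip_at: "i < length v \<Longrightarrow> odd_weight (flip_at i v) \<longleftrightarrow> \<not> odd_weight v"
  by (induction v arbitrary: i) (auto simp: flip_at_def split: nat.splits)

lemma odd_weight_append: "odd_weight (xs @ ys) \<longleftrightarrow> odd_weight xs \<noteq> odd_weight ys"
  by (induction xs) auto

lemma hc_adj_iff_flip_at:
  "hc_adj d u v \<longleftrightarrow> length u = d \<and> (\<exists>i<d. v = flip_at i u)"
proof
  assume adj: "hc_adj d u v"
  then have len: "length u = d" "length v = d" by (auto simp: hc_adj_def hc_verts_def)
  from adj have "card {i. i < d \<and> u ! i \<noteq> v ! i} = 1" by (simp add: hc_adj_def)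
  then obtain i where i: "{i. i < d \<and> u ! i \<noteq> v ! i} = {i}" by (rule card_1_singletonE)
  have "v = flip_at i u"
  proof (rule nth_equalityI)
    fix t assume "t < length v"
    then show "v ! t = flip_at i u ! t"
      using i len by (cases "t = i") (auto simp: flip_at_def)
  qed (simp add: len)
  moreover have "i < d" using i by blast
  ultimately show "length u = d \<and> (\<exists>i<d. v = flip_at i u)" using len by blast
next
  assume "length u = d \<and> (\<exists>i<d. v = flip_at i u)"
  then obtain i where "length u = d" "i < d" "v = flip_at i u" by blast
  moreover from this have "{t. t < d \<and> u ! t \<noteq> v ! t} = {i}"
    by (auto simp: flip_at_def nth_list_update)
  ultimately show "hc_adj d u v" by (simp add: hc_adj_def hc_verts_def)
qed

lemma hc_adj_odd_weight: "hc_adj d u v \<Longrightarrow> odd_weight v \<longleftrightarrow> \<not> odd_weight u"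
  by (auto simp: hc_adj_iff_flip_at odd_weight_flip_at)

lemma card_hc_verts: "card (hc_verts d) = 2 ^ d"
  using card_lists_length_eq[of "UNIV :: bool set" d] by (simp add: hc_verts_def)

lemma finite_hc_verts: "finite (hc_verts d)"
  using finite_lists_length_eq[of "UNIV :: bool set" d] by (simp add: hc_verts_def)

lemma card_odd_weight_eq:
  assumes "n \<ge> 1"
  shows "card {v. length v = n \<and> odd_weight v = c} = 2 ^ (n - 1)"
proof -
  define P where "P c = {v. length v = n \<and> odd_weight v = c}" for c
  have "bij_betw (flip_at 0) (P c) (P (\<not> c))" for c
    using assms by (intro bij_betw_byWitness[where f' = "flip_at 0"])
      (auto simp: P_def odd_weight_flip_at Suc_le_eq)
  from bij_betw_same_card[OF this, of True] have same: "card (P True) = card (P False)" by simp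
  have "P True \<union> P False = hc_verts n" "P True \<inter> P False = {}"
    by (auto simp: P_def hc_verts_def)
  moreover have "finite (P c)" for c
    using finite_hc_verts[of n] by (rule rev_finite_subset) (auto simp: P_def hc_verts_def)
  ultimately have "card (P True) + card (P False) = 2 ^ n"
    using card_Un_disjoint[of "P True" "P False"] card_hc_verts[of n] by simp
  moreover have "(2::nat) ^ n = 2 * 2 ^ (n - 1)"
    using assms by (simp flip: power_Suc)
  ultimately have "card (P c) = 2 ^ (n - 1)" using same by (cases c) auto
  then show ?thesis by (simp add: P_def)
qed

lemma nth_less_leading_ones: "i < leading_ones v \<Longrightarrow> v ! i"
  unfolding leading_ones_def by (metis set_takeWhileD takeWhile_nth nth_mem id_apply)

lemma leading_ones_ge_iff: "k \<le> leading_ones v \<longleftrightarrow> (\<exists>w. v = replicate k True @ w)"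
proof
  assume k: "k \<le> leading_ones v"
  then have "k \<le> length v" using length_takeWhile_le[of id v] by (simp add: leading_ones_def)
  moreover have "take k v = replicate k True"
    using k \<open>k \<le> length v\<close> nth_less_leading_ones by (intro nth_equalityI) auto
  ultimately have "v = replicate k True @ drop k v" by (metis append_take_drop_id)
  then show "\<exists>w. v = replicate k True @ w" ..
qed (auto simp: leading_ones_def takeWhile_append)

lemma card_odd_weight_leading_ones:
  assumes "k < n"
  shows "card {v. length v = n \<and> odd_weight v \<and> k \<le> leading_ones v} = 2 ^ (n - k - 1)"
proof -
  define c where "c = (\<not> odd_weight (replicate k True))"
  have "{v. length v = n \<and> odd_weight v \<and> k \<le> leading_ones v}
      = (@) (replicate k True) ` {w. length w = n - k \<and> odd_weight w = c}"
    using assms by (auto simp: leading_ones_ge_iff odd_weight_append c_def)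
  also have "card \<dots> = card {w. length w = n - k \<and> odd_weight w = c}"
    by (rule card_image) (simp add: inj_on_def)
  also have "\<dots> = 2 ^ (n - k - 1)" using assms card_odd_weight_eq[of "n - k" c] by simp
  finally show ?thesis .
qed

definition flip_index :: "nat \<Rightarrow> bool list \<Rightarrow> nat" where
  "flip_index d v = min (leading_ones v) (d - 1)"

lemma hc_adj_flip_at_flip_index_below:
  assumes v: "length v = d" and u: "u = flip_at (flip_index d v) v"
    and adj: "hc_adj d x u" and "x \<noteq> v" and x_index: "flip_index d x \<le> flip_index d v"
  shows "x \<in> (\<lambda>b. flip_at b u) ` {..<flip_index d v}"
proof -
  define j where "j = flip_index d v"
  from adj obtain b where b: "b < d" "u = flip_at b x" and x: "length x = d"
    by (auto simp: hc_adj_iff_flip_at)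
  then have x_eq: "x = flip_at b u" by simp
  have "b \<noteq> j" using \<open>x \<noteq> v\<close> x_eq u by (auto simp: j_def)
  moreover have "\<not> j < b"
  proof
    assume "j < b"
    then have j: "j = leading_ones v" "j < d - 1" using b by (auto simp: j_def flip_index_def)
    have "x ! t" if "t < Suc j" for t
    proof (cases "t = j")
      case True
      have "\<not> v ! j" using j v nth_length_takeWhile[of id v] by (simp add: leading_ones_def)
      with True \<open>j < b\<close> show ?thesis using x_eq u v j by (simp add: j_def flip_at_def)
    next
      case False
      then have "v ! t" using that j nth_less_leading_ones by simp
      with False that \<open>j < b\<close> show ?thesis using x_eq u v j by (simp add: j_def flip_at_def)
    qed
    then have "Suc j \<le> leading_ones x"
      using j x length_takeWhile_less_P_nth[of "Suc j" id x] by (simp add: leading_ones_def)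
    then have "Suc j \<le> flip_index d x" using j by (simp add: flip_index_def)
    then show False using x_index by (simp add: j_def)
  qed
  ultimately show ?thesis using x_eq by (auto simp: j_def)
qed

definition footprint :: "nat \<Rightarrow> bool list \<Rightarrow> bool list" where
  "footprint d v = (if odd_weight v then flip_at (flip_index d v) v else v)"

definition rank :: "nat \<Rightarrow> bool list \<Rightarrow> nat" where
  "rank d v = (if odd_weight v then Suc (flip_index d v) else 0)"

definition kL_vertices :: "nat \<Rightarrow> nat \<Rightarrow> bool list set" where
  "kL_vertices d k = {v \<in> hc_verts d. odd_weight v \<longrightarrow> flip_index d v < k}"

lemma hc_adj_footprint:
  assumes "length v = d" "d \<ge> 1" "odd_weight v"
  shows "hc_adj d v (footprint d v)"
proof -
  have "flip_index d v < d" using assms(2) by (simp add: flip_index_def)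
  then show ?thesis using assms by (auto simp: hc_adj_iff_flip_at footprint_def)
qed

lemma card_footprint_nbhd_less:
  assumes "1 \<le> k" "1 \<le> d" and v: "v \<in> kL_vertices d k"
  shows "card {x \<in> kL_vertices d k - {v}. rank d x \<le> rank d v \<and>
            footprint d v \<in> open_nbhd (hc_verts d) (hc_adj d) x} < k"
    (is "card ?X < k")
proof (cases "odd_weight v")
  case False
  have empty: "?X = {}"
  proof (rule equals0I)
    fix x assume "x \<in> ?X"
    then have "hc_adj d x v" "\<not> odd_weight x"
      using False by (auto simp: rank_def footprint_def open_nbhd_def split: if_splits)
    then show False using False hc_adj_odd_weight by blast
  qed
  show ?thesis unfolding empty using \<open>1 \<le> k\<close> by simp
next
  case True
  define u where "u = footprint d v"
  have len: "length v = d" using v by (simp add: kL_vertices_def hc_verts_def)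
  have "\<not> odd_weight u" using hc_adj_odd_weight[OF hc_adj_footprint[OF len \<open>1 \<le> d\<close> True]] True
    by (simp add: u_def)
  have "?X \<subseteq> (\<lambda>b. flip_at b u) ` {..<flip_index d v}"
  proof
    fix x assume "x \<in> ?X"
    then have x: "hc_adj d x u" "x \<noteq> v" "rank d x \<le> rank d v"
      by (auto simp: open_nbhd_def u_def)
    then have "odd_weight x" using hc_adj_odd_weight \<open>\<not> odd_weight u\<close> by blast
    then have "flip_index d x \<le> flip_index d v" using x(3) True by (simp add: rank_def)
    then show "x \<in> (\<lambda>b. flip_at b u) ` {..<flip_index d v}"
      using hc_adj_flip_at_flip_index_below[OF len _ x(1,2)] True by (simp add: u_def footprint_def)
  qed
  then have "card ?X \<le> card ((\<lambda>b. flip_at b u) ` {..<flip_index d v})"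
    by (rule card_mono[rotated]) simp
  also have "\<dots> \<le> flip_index d v"
    using card_image_le[of "{..<flip_index d v}" "\<lambda>b. flip_at b u"] by simp
  also have "\<dots> < k" using v True by (simp add: kL_vertices_def)
  finally show ?thesis .
qed

lemma ex_hc_kL_seq:
  assumes "1 \<le> k" "1 \<le> d"
  shows "\<exists>S. is_kL_seq (hc_verts d) (hc_adj d) k S \<and> length S = card (kL_vertices d k)"
proof (rule is_kL_seq_sort_by_rank)
  show "finite (kL_vertices d k)" "kL_vertices d k \<subseteq> hc_verts d"
    using finite_hc_verts[of d] by (auto simp: kL_vertices_def)
  fix v assume v: "v \<in> kL_vertices d k"
  show "footprint d v \<in> closed_nbhd (hc_verts d) (hc_adj d) v"
  proof (cases "odd_weight v")
    case True
    with v assms have "hc_adj d v (footprint d v)"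
      by (intro hc_adj_footprint) (auto simp: kL_vertices_def hc_verts_def)
    then show ?thesis by (auto simp: closed_nbhd_def open_nbhd_def hc_adj_def)
  qed (simp add: closed_nbhd_def footprint_def)
  show "card {x \<in> kL_vertices d k - {v}. rank d x \<le> rank d v \<and>
          footprint d v \<in> open_nbhd (hc_verts d) (hc_adj d) x} < k"
    using card_footprint_nbhd_less[OF assms v] .
qed

lemma card_kL_vertices_ge:
  assumes "1 \<le> d" "k \<le> d"
  shows "2 ^ d - 2 powr (real d - (real k + 1)) \<le> real (card (kL_vertices d k))"
proof -
  define C where "C = {v. length v = d \<and> odd_weight v \<and> k \<le> flip_index d v}"
  have "kL_vertices d k \<union> C = hc_verts d" "kL_vertices d k \<inter> C = {}"
    by (auto simp: kL_vertices_def hc_verts_def C_def)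
  then have "card (kL_vertices d k) + card C = 2 ^ d"
    using card_Un_disjoint finite_hc_verts[of d] card_hc_verts[of d] by (metis finite_Un)
  then have "real (card (kL_vertices d k)) = 2 ^ d - real (card C)"
    by (metis add_diff_cancel_right' of_nat_add of_nat_numeral of_nat_power)
  moreover have "real (card C) \<le> 2 powr (real d - (real k + 1))"
  proof (cases "k = d")
    case True
    then have "C = {}" using assms by (auto simp: C_def flip_index_def)
    then show ?thesis by simp
  next
    case False
    then have "C = {v. length v = d \<and> odd_weight v \<and> k \<le> leading_ones v}"
      using assms by (auto simp: C_def flip_index_def)
    then have "card C = 2 ^ (d - k - 1)"
      using card_odd_weight_leading_ones[of k d] False assms by simp
    moreover have "real d - (real k + 1) = real (d - k - 1)" using False assms by simp
    then have "(2::real) powr (real d - (real k + 1)) = 2 ^ (d - k - 1)"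
      by (simp only: powr_realpow zero_less_numeral)
    ultimately show ?thesis by simp
  qed
  ultimately show ?thesis by simp
qed

theorem mainTheorem9:
  fixes d k :: nat
  assumes "d \<ge> 2" and "1 \<le> k" and "k \<le> d"
  shows "int (gamma_grLk (hc_verts d) (hc_adj d) k)
           \<ge> \<lceil>(2::real) ^ d - 2 powr (real d - (real k + 1))\<rceil>"
proof -
  have "1 \<le> d" using assms(1) by simp
  then obtain S where S: "is_kL_seq (hc_verts d) (hc_adj d) k S"
      "length S = card (kL_vertices d k)"
    using ex_hc_kL_seq assms(2) by blast
  have "card (kL_vertices d k) \<le> gamma_grLk (hc_verts d) (hc_adj d) k"
    using kL_seq_length_le_gamma[OF finite_hc_verts S(1)] S(2) by simp
  moreover have "\<lceil>(2::real) ^ d - 2 powr (real d - (real k + 1))\<rceil> \<le> int (card (kL_vertices d k))"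
    using card_kL_vertices_ge[OF \<open>1 \<le> d\<close> assms(3)] by (intro ceiling_le) simp
  ultimately show ?thesis by linarith
qed

end
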